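(* Let $\Sigma$ be an alphabet with $|\Sigma|\ge 3$, let $f,g\colon\Sigma^*\to\Sigma^*$, and suppose $f$ is RCP and either there is a letter $a\in\Sigma$ with $f(x)=a\,g(x)$ for all $x\in\Sigma^*$, or $f(x)=x\,g(x)$ for all $x\in\Sigma^*$. Then $g$ is RCP.
   Context: $\Sigma^*$ is the free monoid over $\Sigma$ (finite words, concatenation, empty word $\varepsilon$). A function $f\colon(\Sigma^* )^k\to\Sigma^*$ is RCP if for every monoid morphism $\varphi\colon\Sigma^*\to\Sigma^*$ and all $u_1,\ldots,u_k,v_1,\ldots,v_k$ with $\varphi(u_i)=\varphi(v_i)$ for all $i$, we have $\varphi(f(u_1,\ldots,u_k))=\varphi(f(v_1,\ldots,v_k))$. *)

theory Defs
  imports Main "HOL-Library.Cardinality"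
begin

definition monoid_morphism :: "('a list \<Rightarrow> 'b list) \<Rightarrow> bool" where
  "monoid_morphism \<phi> \<longleftrightarrow> \<phi> [] = [] \<and> (\<forall>u v. \<phi> (u @ v) = \<phi> u @ \<phi> v)"

text \<open>RCP for a unary function (the case k = 1 of the general definition).\<close>
definition RCP :: "('a list \<Rightarrow> 'a list) \<Rightarrow> bool" where
  "RCP f \<longleftrightarrow> (\<forall>\<phi> :: 'a list \<Rightarrow> 'a list. monoid_morphism \<phi> \<longrightarrow>
     (\<forall>u v. \<phi> u = \<phi> v \<longrightarrow> \<phi> (f u) = \<phi> (f v)))"

end

theory Submission
  imports Defs
begin

(* A morphism sends h x @ g x to \<phi> (h x) @ \<phi> (g x), and free monoids are left
   cancellative: so if both f = (\<lambda>x. h x @ g x) and its prefix part h preserve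
   \<phi>-equality, so does g. A constant one-letter prefix and the identity prefix both do. *)

lemma monoid_morphism_append:
  "monoid_morphism \<phi> \<Longrightarrow> \<phi> (u @ v) = \<phi> u @ \<phi> v"
  unfolding monoid_morphism_def by blast

lemma RCP_const: "RCP (\<lambda>_. w)"
  unfolding RCP_def by blast

lemma RCP_id: "RCP (\<lambda>x. x)"
  unfolding RCP_def by blast

lemma RCP_cancel_prefix:
  assumes "RCP h" and "RCP (\<lambda>x. h x @ g x)"
  shows "RCP g"
  unfolding RCP_def
proof (intro allI impI)
  fix \<phi> :: "'a list \<Rightarrow> 'a list" and u v
  assume \<phi>: "monoid_morphism \<phi>" and "\<phi> u = \<phi> v"
  then have "\<phi> (h u) = \<phi> (h v)" and "\<phi> (h u @ g u) = \<phi> (h v @ g v)"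
    using assms unfolding RCP_def by blast+
  then show "\<phi> (g u) = \<phi> (g v)"
    by (simp add: monoid_morphism_append[OF \<phi>])
qed

theorem mainTheorem11:
  fixes f g :: "'a::finite list \<Rightarrow> 'a list"
  assumes "CARD('a) \<ge> 3"
    and "RCP f"
    and "(\<exists>a. \<forall>x. f x = a # g x) \<or> (\<forall>x. f x = x @ g x)"
  shows "RCP g"
  using assms(3)
proof
  assume "\<exists>a. \<forall>x. f x = a # g x"
  then obtain a where "f = (\<lambda>x. [a] @ g x)" by auto
  then show ?thesis using RCP_cancel_prefix[OF RCP_const] assms(2) by blast
next
  assume "\<forall>x. f x = x @ g x"
  then have "f = (\<lambda>x. x @ g x)" by auto
  then show ?thesis using RCP_cancel_prefix[OF RCP_id] assms(2) by blast
qed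

end
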